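(* (Postponement of parallel $\bot$-reduction.) For all $s,t\in\Lambda^\infty$: if $s\to^\infty_{\beta\bot}t$ then there exists $r\in\Lambda^\infty$ such that $s\to^\infty_\beta r$ and $r\Rightarrow_\bot t$.
   Context: Fix an infinite set $V$ of variables and a set $C$ of constants with $V\cap C=\emptyset$, containing a distinguished constant $\bot$. $\Lambda^\infty$ is the set of infinitary lambda-terms: all finite and infinite terms generated coinductively by $t ::= c \mid x \mid t\,t \mid \lambda x.t$, identified up to $\alpha$-equivalence (fresh variables are assumed always available). $s[t/x]$ is capture-avoiding substitution, $\equiv$ identity of terms, an atom is a variable or constant. For $R\subseteq\Lambda^\infty\times\Lambda^\infty$, the compatible closure $\to_R$ is the least relation with: $(s,t)\in R\Rightarrow s\to_R t$; $s\to_R s'\Rightarrow st\to_R s't,\ ts\to_R ts',\ \lambda x.s\to_R\lambda x.s'$. $R_\beta=\{((\lambda x.s)t, s[t/x])\}$, $\to_\beta$ its compatible closure, $\to^*_\beta$ its reflexive-transitive closure. A term is in head normal form (hnf) if it is $\lambda x_1\ldots x_m.\,a\,t_1\ldots t_n$ ($m,n\ge0$, $a$ an atom, $a\not\equiv\bot$); $t$ has a hnf if $t\to^*_\beta t'$ with $t'$ in hnf. $R_\bot=\{(t,\bot)\mid t\text{ has no hnf}, t\not\equiv\bot\}$; $\to_{\beta\bot}$ is the compatible closure of $R_\beta\cup R_\bot$. The infinitary closure $\to^\infty$ of a relation $\to$ (with reflexive-transitive closure $\to^*$) is the greatest relation such that whenever $s\to^\infty t$: $t\equiv a$ atom and $s\to^*a$;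 or $t\equiv t_1't_2'$, $s\to^*t_1t_2$, $t_i\to^\infty t_i'$; or $t\equiv\lambda x.r'$, $s\to^*\lambda x.r$, $r\to^\infty r'$. $\to^\infty_\beta$ and $\to^\infty_{\beta\bot}$ are the infinitary closures of $\to_\beta$ and $\to_{\beta\bot}$. Parallel $\bot$-reduction $\Rightarrow_\bot$ is the greatest relation such that whenever $s\Rightarrow_\bot t$, one of: $(s,t)\in R_\bot$; $s\equiv t\equiv a$ an atom; $s\equiv s_1s_2$, $t\equiv t_1t_2$ with $s_i\Rightarrow_\bot t_i$ ($i=1,2$); $s\equiv\lambda x.s'$, $t\equiv\lambda x.t'$ with $s'\Rightarrow_\bot t'$. *)

theory Defs
  imports Main
begin

text \<open>Infinitary lambda-terms, represented with de Bruijn indices (so terms are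
  identified up to alpha-equivalence by construction).  Free variables are
  de Bruijn indices beyond the enclosing binders; constants have type 'c,
  and the distinguished constant bottom is passed as a parameter.\<close>

codatatype 'c trm = Var nat | Cst 'c | App "'c trm" "'c trm" | Lam "'c trm"

primcorec lift :: "nat \<Rightarrow> nat \<Rightarrow> 'c trm \<Rightarrow> 'c trm" where
  "lift d k t = (case t of
      Var n \<Rightarrow> Var (if n < k then n else n + d)
    | Cst c \<Rightarrow> Cst c
    | App a b \<Rightarrow> App (lift d k a) (lift d k b)
    | Lam a \<Rightarrow> Lam (lift d (Suc k) a))"

primcorec subst :: "nat \<Rightarrow> 'c trm \<Rightarrow> 'c trm \<Rightarrow> 'c trm" where
  "subst k u s = (case s of
      Var n \<Rightarrow> (if n < k then Var n
                 else if n = k then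
                   (case lift k 0 u of
                      Var m \<Rightarrow> Var m
                    | Cst c \<Rightarrow> Cst c
                    | App a b \<Rightarrow> App a b
                    | Lam a \<Rightarrow> Lam a)
                 else Var (n - 1))
    | Cst c \<Rightarrow> Cst c
    | App a b \<Rightarrow> App (subst k u a) (subst k u b)
    | Lam a \<Rightarrow> Lam (subst (Suc k) u a))"

definition is_atom :: "'c trm \<Rightarrow> bool" where
  "is_atom t \<longleftrightarrow> (\<exists>n. t = Var n) \<or> (\<exists>c. t = Cst c)"

inductive compat :: "('c trm \<Rightarrow> 'c trm \<Rightarrow> bool) \<Rightarrow> 'c trm \<Rightarrow> 'c trm \<Rightarrow> bool"
  for R where
  base: "R s t \<Longrightarrow> compat R s t"
| appL: "compat R s s' \<Longrightarrow> compat R (App s t) (App s' t)"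
| appR: "compat R s s' \<Longrightarrow> compat R (App t s) (App t s')"
| lam:  "compat R s s' \<Longrightarrow> compat R (Lam s) (Lam s')"

definition R_beta :: "'c trm \<Rightarrow> 'c trm \<Rightarrow> bool" where
  "R_beta s t \<longleftrightarrow> (\<exists>u v. s = App (Lam u) v \<and> t = subst 0 v u)"

abbreviation beta_step :: "'c trm \<Rightarrow> 'c trm \<Rightarrow> bool" where
  "beta_step \<equiv> compat R_beta"

definition lams :: "nat \<Rightarrow> 'c trm \<Rightarrow> 'c trm" where
  "lams m t = (Lam ^^ m) t"

definition apps :: "'c trm \<Rightarrow> 'c trm list \<Rightarrow> 'c trm" where
  "apps h ts = foldl App h ts"

definition hnf :: "'c \<Rightarrow> 'c trm \<Rightarrow> bool" where
  "hnf bt t \<longleftrightarrow> (\<exists>m a ts. t = lams m (apps a ts) \<and> is_atom a \<and> a \<noteq> Cst bt)"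

definition has_hnf :: "'c \<Rightarrow> 'c trm \<Rightarrow> bool" where
  "has_hnf bt t \<longleftrightarrow> (\<exists>t'. beta_step\<^sup>*\<^sup>* t t' \<and> hnf bt t')"

definition R_bot :: "'c \<Rightarrow> 'c trm \<Rightarrow> 'c trm \<Rightarrow> bool" where
  "R_bot bt s t \<longleftrightarrow> \<not> has_hnf bt s \<and> s \<noteq> Cst bt \<and> t = Cst bt"

abbreviation betabot_step :: "'c \<Rightarrow> 'c trm \<Rightarrow> 'c trm \<Rightarrow> bool" where
  "betabot_step bt \<equiv> compat (\<lambda>s t. R_beta s t \<or> R_bot bt s t)"

coinductive inf_closure :: "('c trm \<Rightarrow> 'c trm \<Rightarrow> bool) \<Rightarrow> 'c trm \<Rightarrow> 'c trm \<Rightarrow> bool"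
  for step where
  atom: "is_atom a \<Longrightarrow> step\<^sup>*\<^sup>* s a \<Longrightarrow> inf_closure step s a"
| app: "step\<^sup>*\<^sup>* s (App t1 t2) \<Longrightarrow> inf_closure step t1 t1' \<Longrightarrow> inf_closure step t2 t2'
        \<Longrightarrow> inf_closure step s (App t1' t2')"
| lam: "step\<^sup>*\<^sup>* s (Lam r) \<Longrightarrow> inf_closure step r r' \<Longrightarrow> inf_closure step s (Lam r')"

coinductive par_bot :: "'c \<Rightarrow> 'c trm \<Rightarrow> 'c trm \<Rightarrow> bool" for bt where
  rbot: "R_bot bt s t \<Longrightarrow> par_bot bt s t"
| atom: "is_atom a \<Longrightarrow> par_bot bt a a"
| app: "par_bot bt s1 t1 \<Longrightarrow> par_bot bt s2 t2 \<Longrightarrow> par_bot bt (App s1 s2) (App t1 t2)"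
| lam: "par_bot bt s t \<Longrightarrow> par_bot bt (Lam s) (Lam t)"

end

theory Submission
  imports Defs
begin

text \<open>The reduct r is built corecursively along t.  At each position the invariant is that
  the current source term w and the target subterm t' satisfy w \<Rightarrow>\<bottom> u and u \<rightarrow>\<infinity>\<beta>\<bottom> t' for
  some u.  The finite \<beta>\<bottom>-reduction leading from u to the root constructor of t' can be replayed
  by finitely many \<beta>-steps out of w while keeping \<Rightarrow>\<bottom>: a \<beta>-step is mirrored because \<Rightarrow>\<bottom> is
  closed under substitution, and a \<bottom>-step is absorbed because \<Rightarrow>\<bottom> preserves having a hnf.
  Hence the root constructor of t' is reached by \<beta>-reduction from w, and the invariant passes
  to the immediate subterms.

  Two facts about hnfs carry the argument.  Substitution and lifting reflect having a hnf, since
  reductions of an instance of a term are mirrored by reductions of the term itself; and terms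
  that agree up to subterms without hnf have a hnf together, since reductions of one are mirrored
  in the other.\<close>

lemma lift_simps [simp]:
  "lift d k (Var n) = Var (if n < k then n else n + d)"
  "lift d k (Cst c) = Cst c"
  "lift d k (App a b) = App (lift d k a) (lift d k b)"
  "lift d k (Lam a) = Lam (lift d (Suc k) a)"
  by (subst lift.code; simp)+

lemma trm_case_self:
  "(case t of Var m \<Rightarrow> Var m | Cst c \<Rightarrow> Cst c | App a b \<Rightarrow> App a b | Lam a \<Rightarrow> Lam a) = t"
  by (cases t) auto

lemma subst_simps [simp]:
  "subst k u (Var n) = (if n < k then Var n else if n = k then lift k 0 u else Var (n - 1))"
  "subst k u (Cst c) = Cst c"
  "subst k u (App a b) = App (subst k u a) (subst k u b)"
  "subst k u (Lam a) = Lam (subst (Suc k) u a)"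
  by (subst subst.code; simp add: trm_case_self)+

lemma is_atom_simps [simp]:
  "is_atom (Var n)" "is_atom (Cst c)" "\<not> is_atom (App a b)" "\<not> is_atom (Lam a)"
  by (auto simp: is_atom_def)

lemma is_atom_lift: "is_atom a \<Longrightarrow> is_atom (lift d i a)"
  by (auto simp: is_atom_def)

lemma apps_Nil [simp]: "apps h [] = h"
  by (simp add: apps_def)

lemma apps_snoc [simp]: "apps h (ts @ [t]) = App (apps h ts) t"
  by (simp add: apps_def)

lemma lams_0 [simp]: "lams 0 t = t"
  by (simp add: lams_def)

lemma lams_Suc [simp]: "lams (Suc m) t = Lam (lams m t)"
  by (simp add: lams_def)

lemma rtranclp_map:
  assumes "\<And>x y. r x y \<Longrightarrow> r' (f x) (f y)" and "r\<^sup>*\<^sup>* x y"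
  shows "r'\<^sup>*\<^sup>* (f x) (f y)"
  using assms(2) by induction (auto intro: rtranclp.rtrancl_into_rtrancl assms(1))

lemma beta_steps_Lam: "beta_step\<^sup>*\<^sup>* p p' \<Longrightarrow> beta_step\<^sup>*\<^sup>* (Lam p) (Lam p')"
  by (rule rtranclp_map[where f = Lam]) (rule compat.lam)

lemma compat_CstD: "compat R (Cst c) x \<Longrightarrow> R (Cst c) x"
  by (erule compat.cases) auto

lemma beta_steps_CstD: "beta_step\<^sup>*\<^sup>* (Cst c) x \<Longrightarrow> x = Cst c"
proof (induction rule: rtranclp_induct)
  case (step y z)
  then show ?case
    using compat_CstD[of R_beta c z] by (simp add: R_beta_def)
qed simp

lemma beta_step_App_cases:
  "beta_step (App a b) x \<Longrightarrow>
     (\<exists>p. a = Lam p \<and> x = subst 0 b p) \<or> (\<exists>a'. x = App a' b \<and> beta_step a a') \<or>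
     (\<exists>b'. x = App a b' \<and> beta_step b b')"
  by (erule compat.cases) (auto simp: R_beta_def)

lemma beta_steps_App_cases:
  "beta_step\<^sup>*\<^sup>* (App t1 t2) h \<Longrightarrow>
     (\<exists>h1 h2. h = App h1 h2 \<and> beta_step\<^sup>*\<^sup>* t1 h1) \<or>
     (\<exists>p q. beta_step\<^sup>*\<^sup>* t1 (Lam p) \<and> beta_step\<^sup>*\<^sup>* (subst 0 q p) h)"
proof (induction rule: rtranclp_induct)
  case (step y z)
  from step.IH show ?case
  proof (elim disjE exE conjE)
    fix h1 h2
    assume y: "y = App h1 h2" and h1: "beta_step\<^sup>*\<^sup>* t1 h1"
    from beta_step_App_cases[OF step.hyps(2)[unfolded y]] h1 show ?case
      by (blast intro: rtranclp.rtrancl_into_rtrancl)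
  next
    fix p q
    assume "beta_step\<^sup>*\<^sup>* t1 (Lam p)" "beta_step\<^sup>*\<^sup>* (subst 0 q p) y"
    with step.hyps(2) show ?case
      by (blast intro: rtranclp.rtrancl_into_rtrancl)
  qed
qed blast

section \<open>Head normal forms\<close>

lemma hnf_apps: "is_atom a \<Longrightarrow> a \<noteq> Cst bt \<Longrightarrow> hnf bt (apps a ts)"
  unfolding hnf_def by (metis lams_0)

lemma hnf_Lam: "hnf bt s \<Longrightarrow> hnf bt (Lam s)"
  unfolding hnf_def by (metis lams_Suc)

lemma hnf_App_fun: "hnf bt (App h1 h2) \<Longrightarrow> hnf bt h1"
proof -
  assume "hnf bt (App h1 h2)"
  then obtain m a ts where h: "App h1 h2 = lams m (apps a ts)" "is_atom a" "a \<noteq> Cst bt"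
    unfolding hnf_def by blast
  then have "m = 0"
    by (cases m) auto
  show ?thesis
  proof (cases ts rule: rev_cases)
    case Nil
    with h \<open>m = 0\<close> show ?thesis
      by (auto simp: is_atom_def)
  next
    case (snoc ts0 t)
    with h \<open>m = 0\<close> show ?thesis
      by (simp add: hnf_apps)
  qed
qed

lemma not_hnf_bot: "\<not> hnf bt (Cst bt)"
proof
  assume "hnf bt (Cst bt)"
  then obtain m a ts where h: "Cst bt = lams m (apps a ts)" "a \<noteq> Cst bt"
    unfolding hnf_def by blast
  then have "m = 0"
    by (cases m) auto
  with h show False
    by (cases ts rule: rev_cases) auto
qed

lemma has_hnf_if_hnf: "hnf bt s \<Longrightarrow> has_hnf bt s"
  unfolding has_hnf_def by blast

lemma has_hnf_rtranclp: "beta_step\<^sup>*\<^sup>* s s' \<Longrightarrow> has_hnf bt s' \<Longrightarrow> has_hnf bt s"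
  unfolding has_hnf_def by (meson rtranclp_trans)

lemma not_has_hnf_bot: "\<not> has_hnf bt (Cst bt)"
  unfolding has_hnf_def by (auto dest: beta_steps_CstD simp: not_hnf_bot)

lemma has_hnf_Lam: "has_hnf bt p \<Longrightarrow> has_hnf bt (Lam p)"
  unfolding has_hnf_def by (auto intro: beta_steps_Lam hnf_Lam)

section \<open>Instances reflect head normal forms\<close>

definition lift_ren :: "(nat \<Rightarrow> nat option) \<Rightarrow> nat \<Rightarrow> nat option" where
  "lift_ren \<rho> n = (case n of 0 \<Rightarrow> Some 0 | Suc m \<Rightarrow> map_option Suc (\<rho> m))"

lemma lift_ren_power:
  "(lift_ren ^^ k) \<rho> n = (if n < k then Some n else map_option (\<lambda>m. m + k) (\<rho> (n - k)))"
proof (induction k arbitrary: n)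
  case 0
  then show ?case
    by (simp add: option.map_ident)
next
  case (Suc k)
  then show ?case
    by (cases n) (simp_all add: lift_ren_def option.map_comp o_def)
qed

lemma lift_ren_power_Suc:
  "lift_ren ((lift_ren ^^ k) \<rho>) n =
     (if n < Suc k then Some n else map_option (\<lambda>m. m + Suc k) (\<rho> (n - Suc k)))"
  using lift_ren_power[of "Suc k" \<rho> n] by simp

inductive stuck :: "(nat \<Rightarrow> nat option) \<Rightarrow> 'c trm \<Rightarrow> bool" where
  Var: "\<rho> n = None \<Longrightarrow> stuck \<rho> (Var n)"
| App: "stuck \<rho> s \<Longrightarrow> stuck \<rho> (App s t)"

lemma not_stuck_Lam_Cst [simp]: "\<not> stuck \<rho> (Lam s)" "\<not> stuck \<rho> (Cst c)"
  by (auto elim: stuck.cases)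

text \<open>In inst \<rho> s t, the term t arises from s by renaming the variables in the domain of
  the partial map \<rho> and replacing subterms stuck on a variable outside that domain by arbitrary
  terms.  Reductions of t are mirrored in s, so a hnf of t yields a hnf of s.\<close>
coinductive inst :: "(nat \<Rightarrow> nat option) \<Rightarrow> 'c trm \<Rightarrow> 'c trm \<Rightarrow> bool" where
  stuck: "stuck \<rho> s \<Longrightarrow> inst \<rho> s t"
| Var: "\<rho> n = Some m \<Longrightarrow> inst \<rho> (Var n) (Var m)"
| Cst: "inst \<rho> (Cst c) (Cst c)"
| App: "inst \<rho> s1 t1 \<Longrightarrow> inst \<rho> s2 t2 \<Longrightarrow> inst \<rho> (App s1 s2) (App t1 t2)"
| Lam: "inst (lift_ren \<rho>) s t \<Longrightarrow> inst \<rho> (Lam s) (Lam t)"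

lemma inst_unfold:
  "inst \<rho> s t \<Longrightarrow> (\<exists>\<rho>' s' t'. \<rho> = \<rho>' \<and> s = s' \<and> t = t' \<and> stuck \<rho>' s') \<or>
  (\<exists>\<rho>' n m. \<rho> = \<rho>' \<and> s = Var n \<and> t = Var m \<and> \<rho>' n = Some m) \<or>
  (\<exists>\<rho>' c. \<rho> = \<rho>' \<and> s = Cst c \<and> t = Cst c) \<or>
  (\<exists>\<rho>' s1 t1 s2 t2. \<rho> = \<rho>' \<and> s = App s1 s2 \<and> t = App t1 t2 \<and>
     (X \<rho>' s1 t1 \<or> inst \<rho>' s1 t1) \<and> (X \<rho>' s2 t2 \<or> inst \<rho>' s2 t2)) \<or>
  (\<exists>\<rho>' s' t'. \<rho> = \<rho>' \<and> s = Lam s' \<and> t = Lam t' \<and> (X (lift_ren \<rho>') s' t' \<or> inst (lift_ren \<rho>') s' t'))"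
  by (erule inst.cases) auto

lemma stuck_lift:
  "stuck ((lift_ren ^^ i) \<rho>) q \<Longrightarrow> stuck ((lift_ren ^^ (i + d)) \<rho>) (lift d i q)"
proof (induction "(lift_ren ^^ i) \<rho>" q rule: stuck.induct)
  case (Var n)
  then have "\<not> n < i"
    by (simp add: lift_ren_power split: if_splits)
  with Var show ?case
    by (auto intro!: stuck.Var simp: lift_ren_power)
qed (auto intro: stuck.App)

lemma inst_lift:
  "inst ((lift_ren ^^ i) \<rho>) q q' \<Longrightarrow> inst ((lift_ren ^^ (i + d)) \<rho>) (lift d i q) (lift d i q')"
proof (coinduction arbitrary: i q q' rule: inst.coinduct)
  case inst
  then show ?case
  proof cases
    case stuck
    then show ?thesis
      using stuck_lift[OF stuck] by simp
  next
    case (Var n m)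
    then show ?thesis
      by (auto simp: lift_ren_power split: if_splits)
  next
    case (Lam s t)
    then show ?thesis
      by simp (rule disjI1, rule exI[of _ "Suc i"], auto)
  qed auto
qed

lemma stuck_subst: "stuck ((lift_ren ^^ Suc j) \<rho>) p \<Longrightarrow> stuck ((lift_ren ^^ j) \<rho>) (subst j q p)"
proof (induction "(lift_ren ^^ Suc j) \<rho>" p rule: stuck.induct)
  case (Var n)
  then have "j < n"
    by (simp add: lift_ren_power_Suc split: if_splits)
  with Var show ?case
    by (auto intro!: stuck.Var simp: lift_ren_power lift_ren_power_Suc split: if_splits)
qed (auto intro: stuck.App)

lemma inst_subst:
  "inst ((lift_ren ^^ Suc j) \<rho>) p p' \<Longrightarrow> inst \<rho> q q' \<Longrightarrow>
     inst ((lift_ren ^^ j) \<rho>) (subst j q p) (subst j q' p')"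
proof (coinduction arbitrary: j p p' rule: inst.coinduct)
  case inst
  from inst(1) show ?case
  proof cases
    case stuck
    then show ?thesis
      using stuck_subst[OF stuck] by simp
  next
    case (Var n m)
    then have nm: "(if n < Suc j then Some n else map_option (\<lambda>m. m + Suc j) (\<rho> (n - Suc j))) = Some m"
      by (simp add: lift_ren_power_Suc)
    consider "n = j" | "n < j" | "j < n"
      by linarith
    then show ?thesis
    proof cases
      case 1
      with nm Var have substs: "subst j q p = lift j 0 q" "subst j q' p' = lift j 0 q'"
        by simp_all
      have "inst ((lift_ren ^^ j) \<rho>) (lift j 0 q) (lift j 0 q')"
        using inst_lift[of 0 \<rho> q q' j] inst(2) by simp
      then show ?thesis
        unfolding substs by (rule inst_unfold)
    next
      case 2
      with nm Var show ?thesis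
        by (simp add: lift_ren_power)
    next
      case 3
      with nm Var show ?thesis
        by (auto simp: lift_ren_power)
    qed
  next
    case (App s1 t1 s2 t2)
    with inst(2) show ?thesis
      by simp blast
  next
    case (Lam s t)
    with inst(2) show ?thesis
      by simp (rule disjI1, rule exI[of _ "Suc j"], auto)
  qed auto
qed

definition pred_ren :: "nat \<Rightarrow> nat option" where
  "pred_ren n = (case n of 0 \<Rightarrow> None | Suc m \<Rightarrow> Some m)"

lemma inst_subst_self: "inst ((lift_ren ^^ k) pred_ren) s (subst k u s)"
proof (coinduction arbitrary: k s rule: inst.coinduct)
  case inst
  show ?case
  proof (cases s)
    case (Var n)
    show ?thesis
    proof (cases "n = k")
      case True
      with Var have "stuck ((lift_ren ^^ k) pred_ren) s"
        by (auto intro!: stuck.Var simp: lift_ren_power pred_ren_def)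
      then show ?thesis
        by simp
    next
      case False
      then have "(lift_ren ^^ k) pred_ren n = Some (if n < k then n else n - 1)"
        by (auto simp: lift_ren_power pred_ren_def split: nat.splits)
      with Var False show ?thesis
        by auto
    qed
  next
    case (Lam a)
    then show ?thesis
      by simp (rule disjI1, rule exI[of _ "Suc k"], auto)
  qed auto
qed

lemma inst_lift_self: "inst ((lift_ren ^^ k) (\<lambda>n. Some (n + d))) u (lift d k u)"
proof (coinduction arbitrary: k u rule: inst.coinduct)
  case inst
  show ?case
  proof (cases u)
    case (Var n)
    then show ?thesis
      by (auto simp: lift_ren_power)
  next
    case (Lam a)
    then show ?thesis
      by simp (rule disjI1, rule exI[of _ "Suc k"], auto)
  qed auto
qed

lemma inst_beta_redex:
  assumes "inst \<rho> s (App (Lam p') q')"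
  shows "\<exists>s'. (s = s' \<or> beta_step s s') \<and> inst \<rho> s' (subst 0 q' p')"
  using assms
proof cases
  case stuck
  then show ?thesis
    using inst.stuck by blast
next
  case (App s1 s2)
  from App(2) show ?thesis
  proof cases
    case stuck
    then show ?thesis
      using App inst.stuck stuck.App by blast
  next
    case (Lam p)
    have "inst ((lift_ren ^^ 0) \<rho>) (subst 0 s2 p) (subst 0 q' p')"
      by (rule inst_subst) (use Lam App in simp_all)
    moreover have "beta_step s (subst 0 s2 p)"
      using App Lam by (auto intro!: compat.base simp: R_beta_def)
    ultimately show ?thesis
      by auto
  qed
qed

lemma inst_beta_step:
  "beta_step t t' \<Longrightarrow> inst \<rho> s t \<Longrightarrow> \<exists>s'. (s = s' \<or> beta_step s s') \<and> inst \<rho> s' t'"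
proof (induction t t' arbitrary: \<rho> s rule: compat.induct)
  case (base t t')
  then obtain p' q' where "t = App (Lam p') q'" "t' = subst 0 q' p'"
    by (auto simp: R_beta_def)
  with inst_beta_redex[of \<rho> s p' q'] base(2) show ?case
    by simp
next
  case (appL a a' b)
  from appL(3) show ?case
  proof cases
    case (App s1 s2)
    with appL.IH obtain s1' where "s1 = s1' \<or> beta_step s1 s1'" "inst \<rho> s1' a'"
      by blast
    with App show ?thesis
      by (auto intro: compat.appL inst.App)
  qed (use inst.stuck in blast)
next
  case (appR a a' b)
  from appR(3) show ?case
  proof cases
    case (App s1 s2)
    with appR.IH obtain s2' where "s2 = s2' \<or> beta_step s2 s2'" "inst \<rho> s2' a'"
      by blast
    with App show ?thesis
      by (auto intro: compat.appR inst.App)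
  qed (use inst.stuck in blast)
next
  case (lam a a')
  from lam(3) show ?case
  proof cases
    case (Lam s0)
    with lam.IH obtain s0' where "s0 = s0' \<or> beta_step s0 s0'" "inst (lift_ren \<rho>) s0' a'"
      by blast
    with Lam show ?thesis
      by (auto intro: compat.lam inst.Lam)
  qed (use inst.stuck in blast)
qed

lemma inst_beta_steps:
  "beta_step\<^sup>*\<^sup>* t t' \<Longrightarrow> inst \<rho> s t \<Longrightarrow> \<exists>s'. beta_step\<^sup>*\<^sup>* s s' \<and> inst \<rho> s' t'"
proof (induction rule: rtranclp_induct)
  case (step y z)
  then obtain s' where "beta_step\<^sup>*\<^sup>* s s'" "inst \<rho> s' y"
    by blast
  with inst_beta_step[OF step(2)] show ?case
    by (metis rtranclp.rtrancl_into_rtrancl)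
qed blast

lemma stuck_hnf: "stuck \<rho> s \<Longrightarrow> hnf bt s"
proof -
  assume "stuck \<rho> s"
  then have "\<exists>n ts. s = apps (Var n) ts"
    by induction (metis apps_Nil, metis apps_snoc)
  then obtain n ts where "s = apps (Var n) ts"
    by blast
  then show ?thesis
    by (simp add: hnf_apps)
qed

lemma inst_apps:
  "inst \<rho> s (apps a ts) \<Longrightarrow> is_atom a \<Longrightarrow> a \<noteq> Cst bt \<Longrightarrow>
     stuck \<rho> s \<or> (\<exists>a' ts'. s = apps a' ts' \<and> is_atom a' \<and> a' \<noteq> Cst bt)"
proof (induction ts arbitrary: s rule: rev_induct)
  case Nil
  from Nil(1) show ?case
  proof cases
    case (Var n m)
    then show ?thesis
      by (metis apps_Nil is_atom_simps(1) trm.distinct(1))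
  next
    case (Cst c)
    with Nil show ?thesis
      by (metis apps_Nil)
  qed (use Nil in \<open>auto simp: is_atom_def\<close>)
next
  case (snoc t ts)
  from snoc(2) show ?case
  proof cases
    case (App s1 t1 s2 t2)
    with snoc.IH snoc(3,4) show ?thesis
      by (metis apps_snoc stuck.App trm.inject(3))
  qed auto
qed

lemma inst_hnf: "inst \<rho> s t \<Longrightarrow> hnf bt t \<Longrightarrow> hnf bt s"
proof -
  assume "inst \<rho> s t" "hnf bt t"
  then obtain m a ts where "inst \<rho> s (lams m (apps a ts))" "is_atom a" "a \<noteq> Cst bt"
    unfolding hnf_def by blast
  then show ?thesis
  proof (induction m arbitrary: \<rho> s)
    case 0
    then have "stuck \<rho> s \<or> (\<exists>a' ts'. s = apps a' ts' \<and> is_atom a' \<and> a' \<noteq> Cst bt)"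
      by (intro inst_apps) simp_all
    then show ?case
      by (auto intro: stuck_hnf hnf_apps)
  next
    case (Suc m)
    from Suc(2) show ?case
    proof cases
      case stuck
      then show ?thesis
        by (rule stuck_hnf)
    next
      case (Lam s0)
      with Suc show ?thesis
        by (auto intro: hnf_Lam)
    qed auto
  qed
qed

lemma inst_has_hnf: "inst \<rho> s t \<Longrightarrow> has_hnf bt t \<Longrightarrow> has_hnf bt s"
proof -
  assume "inst \<rho> s t" "has_hnf bt t"
  then obtain t' where t': "beta_step\<^sup>*\<^sup>* t t'" "hnf bt t'"
    unfolding has_hnf_def by blast
  obtain s' where s': "beta_step\<^sup>*\<^sup>* s s'" "inst \<rho> s' t'"
    using inst_beta_steps[OF t'(1) \<open>inst \<rho> s t\<close>] by blast
  have "hnf bt s'"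
    by (rule inst_hnf[OF s'(2) t'(2)])
  with s'(1) show ?thesis
    unfolding has_hnf_def by blast
qed

lemma has_hnf_subst: "has_hnf bt (subst k u s) \<Longrightarrow> has_hnf bt s"
  using inst_has_hnf[OF inst_subst_self] .

lemma has_hnf_lift: "has_hnf bt (lift d k u) \<Longrightarrow> has_hnf bt u"
  using inst_has_hnf[OF inst_lift_self] .

lemma has_hnf_App_fun: "has_hnf bt (App t1 t2) \<Longrightarrow> has_hnf bt t1"
proof -
  assume "has_hnf bt (App t1 t2)"
  then obtain h where h: "beta_step\<^sup>*\<^sup>* (App t1 t2) h" "hnf bt h"
    unfolding has_hnf_def by blast
  from beta_steps_App_cases[OF h(1)] show ?thesis
  proof (elim disjE exE conjE)
    fix h1 h2
    assume "h = App h1 h2" "beta_step\<^sup>*\<^sup>* t1 h1"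
    with h(2) have "hnf bt h1"
      using hnf_App_fun[of bt h1 h2] by simp
    with \<open>beta_step\<^sup>*\<^sup>* t1 h1\<close> show ?thesis
      unfolding has_hnf_def by blast
  next
    fix p q
    assume "beta_step\<^sup>*\<^sup>* t1 (Lam p)" "beta_step\<^sup>*\<^sup>* (subst 0 q p) h"
    with h(2) have "has_hnf bt (subst 0 q p)"
      unfolding has_hnf_def by blast
    then have "has_hnf bt (Lam p)"
      by (rule has_hnf_Lam[OF has_hnf_subst])
    then show ?thesis
      by (rule has_hnf_rtranclp[OF \<open>beta_step\<^sup>*\<^sup>* t1 (Lam p)\<close>])
  qed
qed

section \<open>Parallel closures\<close>

coinductive par_closure :: "('c trm \<Rightarrow> 'c trm \<Rightarrow> bool) \<Rightarrow> 'c trm \<Rightarrow> 'c trm \<Rightarrow> bool"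
  for R where
  base: "R s t \<Longrightarrow> par_closure R s t"
| atom: "is_atom a \<Longrightarrow> par_closure R a a"
| App: "par_closure R s1 t1 \<Longrightarrow> par_closure R s2 t2 \<Longrightarrow> par_closure R (App s1 s2) (App t1 t2)"
| Lam: "par_closure R s t \<Longrightarrow> par_closure R (Lam s) (Lam t)"

lemma par_closure_unfold:
  "par_closure R s t \<Longrightarrow> (\<exists>s' t'. s = s' \<and> t = t' \<and> R s' t') \<or>
   (\<exists>a. s = a \<and> t = a \<and> is_atom a) \<or>
   (\<exists>s1 t1 s2 t2. s = App s1 s2 \<and> t = App t1 t2 \<and>
      (X s1 t1 \<or> par_closure R s1 t1) \<and> (X s2 t2 \<or> par_closure R s2 t2)) \<or>
   (\<exists>s' t'. s = Lam s' \<and> t = Lam t' \<and> (X s' t' \<or> par_closure R s' t'))"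
  by (erule par_closure.cases) auto

lemma par_closure_refl: "par_closure R s s"
proof (coinduction arbitrary: s rule: par_closure.coinduct)
  case par_closure
  then show ?case
    by (cases s) auto
qed

lemma par_closure_mono:
  assumes "\<And>s t. R s t \<Longrightarrow> R' s t"
  shows "par_closure R s t \<Longrightarrow> par_closure R' s t"
proof (coinduction arbitrary: s t rule: par_closure.coinduct)
  case par_closure
  then show ?case
    by cases (auto intro: assms)
qed

lemma par_bot_eq_par_closure: "par_bot bt = par_closure (R_bot bt)"
proof (intro ext iffI)
  fix s t
  show "par_bot bt s t \<Longrightarrow> par_closure (R_bot bt) s t"
    by (coinduction arbitrary: s t rule: par_closure.coinduct) (auto elim: par_bot.cases)
  show "par_closure (R_bot bt) s t \<Longrightarrow> par_bot bt s t"
    by (coinduction arbitrary: s t rule: par_bot.coinduct) (auto elim: par_closure.cases)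
qed

lemma par_closure_lift:
  assumes base_lift: "\<And>d i u u'. R u u' \<Longrightarrow> par_closure R (lift d i u) (lift d i u')"
  shows "par_closure R u u' \<Longrightarrow> par_closure R (lift d i u) (lift d i u')"
proof (coinduction arbitrary: i u u' rule: par_closure.coinduct)
  case par_closure
  then show ?case
  proof cases
    case base
    then show ?thesis
      by (rule par_closure_unfold[OF base_lift])
  next
    case atom
    then show ?thesis
      by (simp add: is_atom_lift)
  qed auto
qed

lemma par_closure_subst:
  assumes base_lift: "\<And>d i u u'. R u u' \<Longrightarrow> par_closure R (lift d i u) (lift d i u')"
    and base_subst: "\<And>k u u' s s'. R s s' \<Longrightarrow> par_closure R (subst k u s) (subst k u' s')"
  shows "par_closure R s s' \<Longrightarrow> par_closure R u u' \<Longrightarrow>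
           par_closure R (subst k u s) (subst k u' s')"
proof (coinduction arbitrary: k s s' rule: par_closure.coinduct)
  case par_closure
  from par_closure(1) show ?case
  proof cases
    case base
    then show ?thesis
      by (rule par_closure_unfold[OF base_subst])
  next
    case atom
    show ?thesis
    proof (cases "s = Var k")
      case True
      with atom have substs: "subst k u s = lift k 0 u" "subst k u' s' = lift k 0 u'"
        by simp_all
      show ?thesis
        unfolding substs
        by (rule par_closure_unfold[OF par_closure_lift[OF base_lift par_closure(2)]])
    next
      case False
      with atom have "subst k u' s' = subst k u s" "is_atom (subst k u s)"
        by (auto simp: is_atom_def split: if_splits)
      then show ?thesis
        by simp
    qed
  next
    case (App s1 t1 s2 t2)
    with par_closure(2) show ?thesis
      by simp blast
  next
    case (Lam s t)
    with par_closure(2) show ?thesis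
      by simp blast
  qed
qed

lemma par_closure_R_bot_bot: "\<not> has_hnf bt s \<Longrightarrow> par_closure (R_bot bt) s (Cst bt)"
  by (cases "s = Cst bt") (auto intro: par_closure.intros simp: R_bot_def)

lemma par_bot_subst:
  "par_bot bt s s' \<Longrightarrow> par_bot bt u u' \<Longrightarrow> par_bot bt (subst k u s) (subst k u' s')"
  unfolding par_bot_eq_par_closure
  by (rule par_closure_subst)
    (auto simp: R_bot_def intro: par_closure_R_bot_bot dest: has_hnf_lift has_hnf_subst)

text \<open>Unlike par_bot, this relation is a simulation for beta_step: in
  (\<lambda>x. p) q \<Rightarrow>\<bottom> \<bottom> q the contractum of the left side is related to \<bottom> q only here.\<close>
abbreviation meaningless_eq :: "'c \<Rightarrow> 'c trm \<Rightarrow> 'c trm \<Rightarrow> bool" where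
  "meaningless_eq bt \<equiv> par_closure (\<lambda>s t. \<not> has_hnf bt s \<and> \<not> has_hnf bt t)"

lemma meaningless_eq_subst:
  "meaningless_eq bt s s' \<Longrightarrow> meaningless_eq bt u u' \<Longrightarrow>
     meaningless_eq bt (subst k u s) (subst k u' s')"
  by (rule par_closure_subst) (auto intro: par_closure.base dest: has_hnf_lift has_hnf_subst)

lemma beta_step_sim_meaningless:
  assumes "beta_step s s'" "\<not> has_hnf bt s" "\<not> has_hnf bt t"
  shows "\<exists>t'. (t = t' \<or> beta_step t t') \<and> meaningless_eq bt s' t'"
proof -
  have "\<not> has_hnf bt s'"
    using assms(1,2) has_hnf_rtranclp[of s s' bt] by blast
  with assms(3) have "meaningless_eq bt s' t"
    by (simp add: par_closure.base)
  then show ?thesis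
    by blast
qed

lemma meaningless_eq_beta_redex:
  assumes "meaningless_eq bt (Lam p) t1" "meaningless_eq bt q t2"
  shows "\<exists>t'. (App t1 t2 = t' \<or> beta_step (App t1 t2) t') \<and> meaningless_eq bt (subst 0 q p) t'"
  using assms(1)
proof cases
  case base
  have "\<not> has_hnf bt (subst 0 q p)"
  proof
    assume "has_hnf bt (subst 0 q p)"
    then have "has_hnf bt (Lam p)"
      by (rule has_hnf_Lam[OF has_hnf_subst])
    with base show False
      by simp
  qed
  moreover have "\<not> has_hnf bt (App t1 t2)"
  proof
    assume "has_hnf bt (App t1 t2)"
    then have "has_hnf bt t1"
      by (rule has_hnf_App_fun)
    with base show False
      by simp
  qed
  ultimately have "meaningless_eq bt (subst 0 q p) (App t1 t2)"
    by (simp add: par_closure.base)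
  then show ?thesis
    by blast
next
  case (Lam p')
  have "meaningless_eq bt (subst 0 q p) (subst 0 t2 p')"
    using Lam assms(2) by (intro meaningless_eq_subst) simp_all
  moreover have "beta_step (App t1 t2) (subst 0 t2 p')"
    unfolding Lam by (rule compat.base) (auto simp: R_beta_def)
  ultimately show ?thesis
    by blast
qed simp

lemma meaningless_eq_beta_step:
  "beta_step s s' \<Longrightarrow> meaningless_eq bt s t \<Longrightarrow>
     \<exists>t'. (t = t' \<or> beta_step t t') \<and> meaningless_eq bt s' t'"
proof (induction s s' arbitrary: t rule: compat.induct)
  case (base s s')
  then obtain p q where s: "s = App (Lam p) q" "s' = subst 0 q p"
    by (auto simp: R_beta_def)
  from base(2) show ?case
  proof cases
    case base
    with \<open>R_beta s s'\<close> show ?thesis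
      by (intro beta_step_sim_meaningless) (auto intro: compat.base)
  next
    case (App s1 t1 s2 t2)
    with s meaningless_eq_beta_redex[of bt p t1 q t2] show ?thesis
      by simp
  qed (use s in simp_all)
next
  case (appL a a' b)
  from appL(3) show ?case
  proof cases
    case base
    then show ?thesis
      by (intro beta_step_sim_meaningless[OF compat.appL[OF appL(1)]]) simp_all
  next
    case (App t1 t2)
    with appL.IH obtain t1' where t1': "t1 = t1' \<or> beta_step t1 t1'" "meaningless_eq bt a' t1'"
      by blast
    have "meaningless_eq bt (App a' b) (App t1' t2)"
      using App t1'(2) by (simp add: par_closure.App)
    moreover have "t = App t1' t2 \<or> beta_step t (App t1' t2)"
      using App(1) t1'(1) compat.appL by blast
    ultimately show ?thesis
      by blast
  qed simp
next
  case (appR a a' b)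
  from appR(3) show ?case
  proof cases
    case base
    then show ?thesis
      by (intro beta_step_sim_meaningless[OF compat.appR[OF appR(1)]]) simp_all
  next
    case (App t1 t2)
    with appR.IH obtain t2' where t2': "t2 = t2' \<or> beta_step t2 t2'" "meaningless_eq bt a' t2'"
      by blast
    have "meaningless_eq bt (App b a') (App t1 t2')"
      using App t2'(2) by (simp add: par_closure.App)
    moreover have "t = App t1 t2' \<or> beta_step t (App t1 t2')"
      using App(1) t2'(1) compat.appR by blast
    ultimately show ?thesis
      by blast
  qed simp
next
  case (lam a a')
  from lam(3) show ?case
  proof cases
    case base
    then show ?thesis
      by (intro beta_step_sim_meaningless[OF compat.lam[OF lam(1)]]) simp_all
  next
    case (Lam t0)
    with lam.IH obtain t0' where t0': "t0 = t0' \<or> beta_step t0 t0'" "meaningless_eq bt a' t0'"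
      by blast
    have "meaningless_eq bt (Lam a') (Lam t0')"
      using t0'(2) by (rule par_closure.Lam)
    moreover have "t = Lam t0' \<or> beta_step t (Lam t0')"
      using Lam(1) t0'(1) compat.lam by blast
    ultimately show ?thesis
      by blast
  qed simp
qed

lemma meaningless_eq_beta_steps:
  "beta_step\<^sup>*\<^sup>* s s' \<Longrightarrow> meaningless_eq bt s t \<Longrightarrow>
     \<exists>t'. beta_step\<^sup>*\<^sup>* t t' \<and> meaningless_eq bt s' t'"
proof (induction rule: rtranclp_induct)
  case (step y z)
  then obtain t' where "beta_step\<^sup>*\<^sup>* t t'" "meaningless_eq bt y t'"
    by blast
  with meaningless_eq_beta_step[OF step(2)] show ?case
    by (metis rtranclp.rtrancl_into_rtrancl)
qed blast

lemma meaningless_eq_apps: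
  assumes "is_atom a" "a \<noteq> Cst bt"
  shows "meaningless_eq bt (apps a ts) t \<Longrightarrow> \<exists>ts'. t = apps a ts'"
proof (induction ts arbitrary: t rule: rev_induct)
  case Nil
  have "has_hnf bt a"
    using has_hnf_if_hnf[OF hnf_apps[OF assms, of "[]"]] by simp
  with Nil assms(1) show ?case
    by (cases rule: par_closure.cases) (auto intro: exI[of _ "[]"])
next
  case (snoc x ts)
  have "has_hnf bt (apps a (ts @ [x]))"
    by (rule has_hnf_if_hnf[OF hnf_apps[OF assms]])
  with snoc.prems show ?case
  proof cases
    case App
    then obtain t1 t2 where "t = App t1 t2" "meaningless_eq bt (apps a ts) t1"
      by auto
    with snoc.IH show ?thesis
      by (metis apps_snoc)
  qed auto
qed

lemma meaningless_eq_hnf: "meaningless_eq bt s t \<Longrightarrow> hnf bt s \<Longrightarrow> hnf bt t"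
proof -
  assume "meaningless_eq bt s t" "hnf bt s"
  then obtain m a ts where "meaningless_eq bt (lams m (apps a ts)) t" "is_atom a" "a \<noteq> Cst bt"
    unfolding hnf_def by blast
  then show ?thesis
  proof (induction m arbitrary: t)
    case 0
    then obtain ts' where "t = apps a ts'"
      using meaningless_eq_apps[of a bt ts t] by auto
    with 0 show ?case
      by (simp add: hnf_apps)
  next
    case (Suc m)
    have "has_hnf bt (lams (Suc m) (apps a ts))"
      using Suc(3,4) unfolding hnf_def has_hnf_def by blast
    with Suc.prems(1) show ?case
    proof cases
      case (Lam t0)
      with Suc show ?thesis
        by (auto intro: hnf_Lam)
    qed auto
  qed
qed

lemma meaningless_eq_has_hnf: "meaningless_eq bt s t \<Longrightarrow> has_hnf bt s \<Longrightarrow> has_hnf bt t"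
proof -
  assume eq: "meaningless_eq bt s t" and "has_hnf bt s"
  then obtain h where h: "beta_step\<^sup>*\<^sup>* s h" "hnf bt h"
    unfolding has_hnf_def by blast
  obtain t' where t': "beta_step\<^sup>*\<^sup>* t t'" "meaningless_eq bt h t'"
    using meaningless_eq_beta_steps[OF h(1) eq] by blast
  have "hnf bt t'"
    by (rule meaningless_eq_hnf[OF t'(2) h(2)])
  with t'(1) show ?thesis
    unfolding has_hnf_def by blast
qed

lemma par_bot_has_hnf: "par_bot bt s t \<Longrightarrow> has_hnf bt s \<Longrightarrow> has_hnf bt t"
  unfolding par_bot_eq_par_closure
  by (rule meaningless_eq_has_hnf[OF par_closure_mono])
    (auto simp: R_bot_def not_has_hnf_bot)

section \<open>Postponement\<close>

lemma par_bot_refl: "par_bot bt s s"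
  unfolding par_bot_eq_par_closure by (rule par_closure_refl)

lemma par_bot_bot: "\<not> has_hnf bt s \<Longrightarrow> par_bot bt s (Cst bt)"
  unfolding par_bot_eq_par_closure by (rule par_closure_R_bot_bot)

lemma par_bot_atomD: "par_bot bt v a \<Longrightarrow> is_atom a \<Longrightarrow> a \<noteq> Cst bt \<Longrightarrow> v = a"
  by (erule par_bot.cases) (auto simp: R_bot_def)

lemma par_bot_AppD:
  "par_bot bt v (App t1 t2) \<Longrightarrow> \<exists>v1 v2. v = App v1 v2 \<and> par_bot bt v1 t1 \<and> par_bot bt v2 t2"
  by (erule par_bot.cases) (auto simp: R_bot_def)

lemma par_bot_LamD: "par_bot bt v (Lam t1) \<Longrightarrow> \<exists>v1. v = Lam v1 \<and> par_bot bt v1 t1"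
  by (erule par_bot.cases) (auto simp: R_bot_def)

lemma par_bot_beta_redex:
  assumes "par_bot bt s (App (Lam p') q')"
  shows "\<exists>s'. beta_step s s' \<and> par_bot bt s' (subst 0 q' p')"
proof -
  obtain s1 s2 where s: "s = App s1 s2" "par_bot bt s1 (Lam p')" "par_bot bt s2 q'"
    using par_bot_AppD[OF assms] by blast
  obtain p where p: "s1 = Lam p" "par_bot bt p p'"
    using par_bot_LamD[OF s(2)] by blast
  have "par_bot bt (subst 0 s2 p) (subst 0 q' p')"
    using p(2) s(3) by (rule par_bot_subst)
  moreover have "beta_step s (subst 0 s2 p)"
    unfolding s(1) p(1) by (rule compat.base) (auto simp: R_beta_def)
  ultimately show ?thesis
    by blast
qed

lemma par_bot_betabot_step:
  "betabot_step bt t t' \<Longrightarrow> par_bot bt s t \<Longrightarrow> \<exists>s'. (s = s' \<or> beta_step s s') \<and> par_bot bt s' t'"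
proof (induction t t' arbitrary: s rule: compat.induct)
  case (base t t')
  from base(1) show ?case
  proof
    assume "R_beta t t'"
    then obtain p' q' where "t = App (Lam p') q'" "t' = subst 0 q' p'"
      by (auto simp: R_beta_def)
    with par_bot_beta_redex[of bt s p' q'] base(2) show ?thesis
      by auto
  next
    assume "R_bot bt t t'"
    then have "\<not> has_hnf bt t" "t' = Cst bt"
      by (auto simp: R_bot_def)
    with par_bot_has_hnf[OF base(2)] have "par_bot bt s t'"
      by (auto intro: par_bot_bot)
    then show ?thesis
      by blast
  qed
next
  case (appL a a' b)
  obtain s1 s2 where s: "s = App s1 s2" "par_bot bt s1 a" "par_bot bt s2 b"
    using par_bot_AppD[OF appL(3)] by blast
  with appL.IH obtain s1' where s1': "s1 = s1' \<or> beta_step s1 s1'" "par_bot bt s1' a'"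
    by blast
  have "par_bot bt (App s1' s2) (App a' b)"
    using s1'(2) s(3) by (rule par_bot.app)
  moreover have "s = App s1' s2 \<or> beta_step s (App s1' s2)"
    using s(1) s1'(1) compat.appL by blast
  ultimately show ?case
    by blast
next
  case (appR a a' b)
  obtain s1 s2 where s: "s = App s1 s2" "par_bot bt s1 b" "par_bot bt s2 a"
    using par_bot_AppD[OF appR(3)] by blast
  with appR.IH obtain s2' where s2': "s2 = s2' \<or> beta_step s2 s2'" "par_bot bt s2' a'"
    by blast
  have "par_bot bt (App s1 s2') (App b a')"
    using s(2) s2'(2) by (rule par_bot.app)
  moreover have "s = App s1 s2' \<or> beta_step s (App s1 s2')"
    using s(1) s2'(1) compat.appR by blast
  ultimately show ?case
    by blast
next
  case (lam a a')
  obtain s0 where s: "s = Lam s0" "par_bot bt s0 a"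
    using par_bot_LamD[OF lam(3)] by blast
  with lam.IH obtain s0' where s0': "s0 = s0' \<or> beta_step s0 s0'" "par_bot bt s0' a'"
    by blast
  have "par_bot bt (Lam s0') (Lam a')"
    using s0'(2) by (rule par_bot.lam)
  moreover have "s = Lam s0' \<or> beta_step s (Lam s0')"
    using s(1) s0'(1) compat.lam by blast
  ultimately show ?case
    by blast
qed

lemma par_bot_betabot_steps:
  "(betabot_step bt)\<^sup>*\<^sup>* t t' \<Longrightarrow> par_bot bt s t \<Longrightarrow> \<exists>s'. beta_step\<^sup>*\<^sup>* s s' \<and> par_bot bt s' t'"
proof (induction rule: rtranclp_induct)
  case (step y z)
  then obtain s' where "beta_step\<^sup>*\<^sup>* s s'" "par_bot bt s' y"
    by blast
  with par_bot_betabot_step[OF step(2)] show ?case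
    by (metis rtranclp.rtrancl_into_rtrancl)
qed blast

lemma par_bot_inf_atomD:
  assumes "(par_bot bt OO inf_closure (betabot_step bt)) w a" "is_atom a"
  shows "\<exists>v. beta_step\<^sup>*\<^sup>* w v \<and> par_bot bt v a"
proof -
  from assms(1) obtain t where t: "par_bot bt w t" "inf_closure (betabot_step bt) t a"
    by (elim relcomppE)
  from t(2) assms(2) have "(betabot_step bt)\<^sup>*\<^sup>* t a"
    by cases simp_all
  from par_bot_betabot_steps[OF this t(1)] show ?thesis .
qed

lemma par_bot_inf_AppD:
  assumes "(par_bot bt OO inf_closure (betabot_step bt)) w (App a b)"
  shows "\<exists>v1 v2. beta_step\<^sup>*\<^sup>* w (App v1 v2) \<and>
    (par_bot bt OO inf_closure (betabot_step bt)) v1 a \<and>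
    (par_bot bt OO inf_closure (betabot_step bt)) v2 b"
proof -
  from assms obtain t where t: "par_bot bt w t" "inf_closure (betabot_step bt) t (App a b)"
    by (elim relcomppE)
  from t(2) obtain t1 t2 where tt: "(betabot_step bt)\<^sup>*\<^sup>* t (App t1 t2)"
    "inf_closure (betabot_step bt) t1 a" "inf_closure (betabot_step bt) t2 b"
    by cases simp_all
  obtain v where v: "beta_step\<^sup>*\<^sup>* w v" "par_bot bt v (App t1 t2)"
    using par_bot_betabot_steps[OF tt(1) t(1)] by blast
  obtain v1 v2 where v12: "v = App v1 v2" "par_bot bt v1 t1" "par_bot bt v2 t2"
    using par_bot_AppD[OF v(2)] by blast
  have "(par_bot bt OO inf_closure (betabot_step bt)) v1 a"
    using v12(2) tt(2) by (rule relcomppI)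
  moreover have "(par_bot bt OO inf_closure (betabot_step bt)) v2 b"
    using v12(3) tt(3) by (rule relcomppI)
  ultimately show ?thesis
    using v(1) v12(1) by blast
qed

lemma par_bot_inf_LamD:
  assumes "(par_bot bt OO inf_closure (betabot_step bt)) w (Lam a)"
  shows "\<exists>v. beta_step\<^sup>*\<^sup>* w (Lam v) \<and> (par_bot bt OO inf_closure (betabot_step bt)) v a"
proof -
  from assms obtain t where t: "par_bot bt w t" "inf_closure (betabot_step bt) t (Lam a)"
    by (elim relcomppE)
  from t(2) obtain t1 where tt: "(betabot_step bt)\<^sup>*\<^sup>* t (Lam t1)"
    "inf_closure (betabot_step bt) t1 a"
    by cases simp_all
  obtain v where v: "beta_step\<^sup>*\<^sup>* w v" "par_bot bt v (Lam t1)"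
    using par_bot_betabot_steps[OF tt(1) t(1)] by blast
  obtain v1 where v1: "v = Lam v1" "par_bot bt v1 t1"
    using par_bot_LamD[OF v(2)] by blast
  have "(par_bot bt OO inf_closure (betabot_step bt)) v1 a"
    using v1(2) tt(2) by (rule relcomppI)
  then show ?thesis
    using v(1) v1(1) by blast
qed

lemma par_bot_inf_beta_steps_atom:
  assumes "(par_bot bt OO inf_closure (betabot_step bt)) w a" "is_atom a" "a \<noteq> Cst bt"
  shows "beta_step\<^sup>*\<^sup>* w a"
proof -
  obtain v where "beta_step\<^sup>*\<^sup>* w v" "par_bot bt v a"
    using par_bot_inf_atomD[OF assms(1,2)] by blast
  with par_bot_atomD[OF _ assms(2,3)] show ?thesis
    by blast
qed

definition choose_App :: "'c \<Rightarrow> 'c trm \<Rightarrow> 'c trm \<Rightarrow> 'c trm \<Rightarrow> 'c trm \<times> 'c trm" where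
  "choose_App bt w a b = (SOME v. beta_step\<^sup>*\<^sup>* w (App (fst v) (snd v)) \<and>
     (par_bot bt OO inf_closure (betabot_step bt)) (fst v) a \<and>
     (par_bot bt OO inf_closure (betabot_step bt)) (snd v) b)"

definition choose_Lam :: "'c \<Rightarrow> 'c trm \<Rightarrow> 'c trm \<Rightarrow> 'c trm" where
  "choose_Lam bt w a = (SOME v. beta_step\<^sup>*\<^sup>* w (Lam v) \<and> (par_bot bt OO inf_closure (betabot_step bt)) v a)"

definition choose_bot :: "'c \<Rightarrow> 'c trm \<Rightarrow> 'c trm" where
  "choose_bot bt w = (SOME v. beta_step\<^sup>*\<^sup>* w v \<and> par_bot bt v (Cst bt))"

primcorec postpone :: "'c \<Rightarrow> 'c trm \<Rightarrow> 'c trm \<Rightarrow> 'c trm" where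
  "postpone bt w t' = (case t' of
      Var n \<Rightarrow> Var n
    | Cst c \<Rightarrow> (if c = bt then
        (case choose_bot bt w of Var m \<Rightarrow> Var m | Cst d \<Rightarrow> Cst d | App x y \<Rightarrow> App x y | Lam x \<Rightarrow> Lam x)
        else Cst c)
    | App a b \<Rightarrow> App (postpone bt (fst (choose_App bt w a b)) a) (postpone bt (snd (choose_App bt w a b)) b)
    | Lam a \<Rightarrow> Lam (postpone bt (choose_Lam bt w a) a))"

lemma postpone_simps:
  "postpone bt w (Var n) = Var n"
  "postpone bt w (Cst c) = (if c = bt then choose_bot bt w else Cst c)"
  "postpone bt w (App a b) =
     App (postpone bt (fst (choose_App bt w a b)) a) (postpone bt (snd (choose_App bt w a b)) b)"
  "postpone bt w (Lam a) = Lam (postpone bt (choose_Lam bt w a) a)"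
  by (subst postpone.code; simp add: trm_case_self)+

lemma choose_App:
  assumes "(par_bot bt OO inf_closure (betabot_step bt)) w (App a b)"
  shows "beta_step\<^sup>*\<^sup>* w (App (fst (choose_App bt w a b)) (snd (choose_App bt w a b)))"
    and "(par_bot bt OO inf_closure (betabot_step bt)) (fst (choose_App bt w a b)) a"
    and "(par_bot bt OO inf_closure (betabot_step bt)) (snd (choose_App bt w a b)) b"
proof -
  from par_bot_inf_AppD[OF assms] obtain v1 v2 where
    "beta_step\<^sup>*\<^sup>* w (App v1 v2) \<and> (par_bot bt OO inf_closure (betabot_step bt)) v1 a \<and>
       (par_bot bt OO inf_closure (betabot_step bt)) v2 b"
    by blast
  then have "\<exists>v. beta_step\<^sup>*\<^sup>* w (App (fst v) (snd v)) \<and>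
     (par_bot bt OO inf_closure (betabot_step bt)) (fst v) a \<and>
     (par_bot bt OO inf_closure (betabot_step bt)) (snd v) b"
    by (intro exI[of _ "(v1, v2)"]) simp
  then have "beta_step\<^sup>*\<^sup>* w (App (fst (choose_App bt w a b)) (snd (choose_App bt w a b))) \<and>
     (par_bot bt OO inf_closure (betabot_step bt)) (fst (choose_App bt w a b)) a \<and>
     (par_bot bt OO inf_closure (betabot_step bt)) (snd (choose_App bt w a b)) b"
    unfolding choose_App_def by (rule someI_ex)
  then show "beta_step\<^sup>*\<^sup>* w (App (fst (choose_App bt w a b)) (snd (choose_App bt w a b)))"
    and "(par_bot bt OO inf_closure (betabot_step bt)) (fst (choose_App bt w a b)) a"
    and "(par_bot bt OO inf_closure (betabot_step bt)) (snd (choose_App bt w a b)) b"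
    by blast+
qed

lemma choose_Lam:
  assumes "(par_bot bt OO inf_closure (betabot_step bt)) w (Lam a)"
  shows "beta_step\<^sup>*\<^sup>* w (Lam (choose_Lam bt w a))"
    and "(par_bot bt OO inf_closure (betabot_step bt)) (choose_Lam bt w a) a"
  using someI_ex[OF par_bot_inf_LamD[OF assms]] unfolding choose_Lam_def by blast+

lemma choose_bot:
  assumes "(par_bot bt OO inf_closure (betabot_step bt)) w (Cst bt)"
  shows "beta_step\<^sup>*\<^sup>* w (choose_bot bt w)" and "par_bot bt (choose_bot bt w) (Cst bt)"
  using someI_ex[OF par_bot_inf_atomD[OF assms]] unfolding choose_bot_def by (simp_all only: is_atom_simps)

lemma inf_closure_refl: "inf_closure r s s"
proof (coinduction arbitrary: s rule: inf_closure.coinduct)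
  case inf_closure
  then show ?case
    by (cases s) auto
qed

lemma inf_closure_unfold:
  "inf_closure r s t \<Longrightarrow>
     (\<exists>a s'. s = s' \<and> t = a \<and> is_atom a \<and> r\<^sup>*\<^sup>* s' a) \<or>
     (\<exists>s' t1 t2 t1' t2'. s = s' \<and> t = App t1' t2' \<and> r\<^sup>*\<^sup>* s' (App t1 t2) \<and>
        (X t1 t1' \<or> inf_closure r t1 t1') \<and> (X t2 t2' \<or> inf_closure r t2 t2')) \<or>
     (\<exists>s' u u'. s = s' \<and> t = Lam u' \<and> r\<^sup>*\<^sup>* s' (Lam u) \<and> (X u u' \<or> inf_closure r u u'))"
  by (erule inf_closure.cases) auto

lemma inf_closure_rtranclp_trans: "r\<^sup>*\<^sup>* s s' \<Longrightarrow> inf_closure r s' t \<Longrightarrow> inf_closure r s t"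
  by (erule inf_closure.cases) (metis inf_closure.intros rtranclp_trans)+

lemma inf_closure_postpone:
  "(par_bot bt OO inf_closure (betabot_step bt)) w t' \<Longrightarrow> inf_closure beta_step w (postpone bt w t')"
proof (coinduction arbitrary: w t' rule: inf_closure.coinduct)
  case inf_closure
  show ?case
  proof (cases t')
    case (Var n)
    with par_bot_inf_beta_steps_atom[OF inf_closure] show ?thesis
      by (simp add: postpone_simps)
  next
    case (Cst c)
    show ?thesis
    proof (cases "c = bt")
      case False
      with Cst par_bot_inf_beta_steps_atom[OF inf_closure] show ?thesis
        by (simp add: postpone_simps)
    next
      case True
      with Cst inf_closure have "inf_closure beta_step w (postpone bt w t')"
        by (simp add: postpone_simps inf_closure_rtranclp_trans[OF choose_bot(1) inf_closure_refl])
      then show ?thesis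
        by (rule inf_closure_unfold)
    qed
  next
    case (App a b)
    define v1 v2 where "v1 = fst (choose_App bt w a b)" and "v2 = snd (choose_App bt w a b)"
    have "beta_step\<^sup>*\<^sup>* w (App v1 v2)"
      "(par_bot bt OO inf_closure (betabot_step bt)) v1 a"
      "(par_bot bt OO inf_closure (betabot_step bt)) v2 b"
      using choose_App[OF inf_closure[unfolded App]] by (simp_all add: v1_def v2_def)
    moreover have "postpone bt w t' = App (postpone bt v1 a) (postpone bt v2 b)"
      by (simp add: App postpone_simps v1_def v2_def)
    ultimately show ?thesis
      by blast
  next
    case (Lam a)
    define v where "v = choose_Lam bt w a"
    have "beta_step\<^sup>*\<^sup>* w (Lam v)" "(par_bot bt OO inf_closure (betabot_step bt)) v a"
      using choose_Lam[OF inf_closure[unfolded Lam]] by (simp_all add: v_def)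
    moreover have "postpone bt w t' = Lam (postpone bt v a)"
      by (simp add: Lam postpone_simps v_def)
    ultimately show ?thesis
      by blast
  qed
qed

lemma par_bot_unfold:
  "par_bot bt s t \<Longrightarrow> (\<exists>s' t'. s = s' \<and> t = t' \<and> R_bot bt s' t') \<or>
   (\<exists>a. s = a \<and> t = a \<and> is_atom a) \<or>
   (\<exists>s1 t1 s2 t2. s = App s1 s2 \<and> t = App t1 t2 \<and>
      (X s1 t1 \<or> par_bot bt s1 t1) \<and> (X s2 t2 \<or> par_bot bt s2 t2)) \<or>
   (\<exists>s' t'. s = Lam s' \<and> t = Lam t' \<and> (X s' t' \<or> par_bot bt s' t'))"
  by (erule par_bot.cases) auto

lemma par_bot_postpone:
  "(par_bot bt OO inf_closure (betabot_step bt)) w t' \<Longrightarrow> par_bot bt (postpone bt w t') t'"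
proof (coinduction arbitrary: w t' rule: par_bot.coinduct)
  case par_bot
  show ?case
  proof (cases t')
    case (Var n)
    then show ?thesis
      by (simp add: postpone_simps)
  next
    case (Cst c)
    show ?thesis
    proof (cases "c = bt")
      case False
      with Cst show ?thesis
        by (simp add: postpone_simps)
    next
      case True
      with Cst par_bot have "par_bot bt (postpone bt w t') t'"
        by (simp add: postpone_simps choose_bot(2))
      then show ?thesis
        by (rule par_bot_unfold)
    qed
  next
    case (App a b)
    define v1 v2 where "v1 = fst (choose_App bt w a b)" and "v2 = snd (choose_App bt w a b)"
    have "(par_bot bt OO inf_closure (betabot_step bt)) v1 a"
      "(par_bot bt OO inf_closure (betabot_step bt)) v2 b"
      using choose_App(2,3)[OF par_bot[unfolded App]] by (simp_all add: v1_def v2_def)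
    moreover have "postpone bt w t' = App (postpone bt v1 a) (postpone bt v2 b)"
      by (simp add: App postpone_simps v1_def v2_def)
    ultimately show ?thesis
      using App by blast
  next
    case (Lam a)
    define v where "v = choose_Lam bt w a"
    have "(par_bot bt OO inf_closure (betabot_step bt)) v a"
      using choose_Lam(2)[OF par_bot[unfolded Lam]] by (simp add: v_def)
    moreover have "postpone bt w t' = Lam (postpone bt v a)"
      by (simp add: Lam postpone_simps v_def)
    ultimately show ?thesis
      using Lam by blast
  qed
qed

theorem theorem5p30:
  fixes bt :: 'c and s t :: "'c trm"
  assumes "inf_closure (betabot_step bt) s t"
  shows "\<exists>r. inf_closure beta_step s r \<and> par_bot bt r t"
proof -
  have "(par_bot bt OO inf_closure (betabot_step bt)) s t"
    using par_bot_refl assms by (rule relcomppI)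
  then have "inf_closure beta_step s (postpone bt s t)" "par_bot bt (postpone bt s t) t"
    by (rule inf_closure_postpone, rule par_bot_postpone)
  then show ?thesis
    by blast
qed

end
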